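(* Let $f:\mathbb{R}^n\to(-\infty,+\infty]$ be proper, lower semicontinuous and prox-bounded with threshold $\lambda_f>0$. Then (i) $\operatorname{dom}\partial_p^\lambda f\ne\varnothing$ for every $0<\lambda<\lambda_f$; (ii) $\lambda_f=\sup\{\lambda>0:\operatorname{dom}\partial_p^\lambda f\ne\varnothing\}$.
   Context: Prox-bounded with threshold $\lambda_f=\sup\{\lambda>0:\inf_y\{f(y)+\frac1{2\lambda}\|y-x\|^2\}>-\infty\text{ for some }x\}$. $v\in\partial_p^\lambda f(x)$ iff $x\in\operatorname{dom}f$ and $f(y)\ge f(x)+\langle v,y-x\rangle-\frac1{2\lambda}\|y-x\|^2$ for all $y$; $\operatorname{dom}\partial_p^\lambda f=\{x:\partial_p^\lambda f(x)\ne\varnothing\}$. *)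

theory Defs
  imports "HOL-Analysis.Analysis"
begin

text \<open>Extended-real-valued functions f : R^n -> (-inf, +inf], modelled as
  functions into ereal that never take the value -inf.\<close>

definition proper_fun :: "('a::euclidean_space \<Rightarrow> ereal) \<Rightarrow> bool" where
  "proper_fun f \<longleftrightarrow> (\<forall>x. f x \<noteq> -\<infinity>) \<and> (\<exists>x. f x < \<infinity>)"

definition lsc_fun :: "('a::euclidean_space \<Rightarrow> ereal) \<Rightarrow> bool" where
  "lsc_fun f \<longleftrightarrow> (\<forall>x. f x \<le> Liminf (at x) f)"

definition prox_lambdas :: "('a::euclidean_space \<Rightarrow> ereal) \<Rightarrow> real set" where
  "prox_lambdas f = {lam. lam > 0 \<and>
     (\<exists>x. (INF y. f y + ereal (norm (y - x) ^ 2 / (2 * lam))) > -\<infinity>)}"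

definition prox_bounded :: "('a::euclidean_space \<Rightarrow> ereal) \<Rightarrow> bool" where
  "prox_bounded f \<longleftrightarrow> prox_lambdas f \<noteq> {}"

definition prox_threshold :: "('a::euclidean_space \<Rightarrow> ereal) \<Rightarrow> ereal" where
  "prox_threshold f = (SUP lam\<in>prox_lambdas f. ereal lam)"

definition prox_subdiff :: "real \<Rightarrow> ('a::euclidean_space \<Rightarrow> ereal) \<Rightarrow> 'a \<Rightarrow> 'a set" where
  "prox_subdiff lam f x = {v. f x < \<infinity> \<and>
     (\<forall>y. f y \<ge> f x + ereal (inner v (y - x) - norm (y - x) ^ 2 / (2 * lam)))}"

definition dom_prox_subdiff :: "real \<Rightarrow> ('a::euclidean_space \<Rightarrow> ereal) \<Rightarrow> 'a set" where
  "dom_prox_subdiff lam f = {x. prox_subdiff lam f x \<noteq> {}}"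

end

theory Submission
  imports Defs
begin

(* If 0 < lam < mu and the Moreau envelope with parameter mu is finite at x0, then
   f + |. - x0|^2/(2 lam) exceeds a constant plus (1/(2 lam) - 1/(2 mu)) |. - x0|^2, so it is
   coercive; being lower semicontinuous it attains its minimum at some y, and minimality at y is
   precisely the proximal subgradient inequality for v = (x0 - y)/lam.  Conversely, a proximal
   subgradient v at x gives f + |. - (x + lam v)|^2/(2 lam) >= f x + lam |v|^2/2, so lam is a
   prox-bound. *)

lemma lsc_fun_iff_eventually:
  "lsc_fun f \<longleftrightarrow> (\<forall>x t. ereal t < f x \<longrightarrow> eventually (\<lambda>z. ereal t < f z) (nhds x))"
proof
  assume lsc: "lsc_fun f"
  show "\<forall>x t. ereal t < f x \<longrightarrow> eventually (\<lambda>z. ereal t < f z) (nhds x)"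
  proof (intro allI impI)
    fix x t assume gt: "ereal t < f x"
    have "eventually (\<lambda>z. ereal t < f z) (at x)"
      using lsc gt unfolding lsc_fun_def le_Liminf_iff by blast
    then show "eventually (\<lambda>z. ereal t < f z) (nhds x)"
      unfolding eventually_at_filter by (rule eventually_mono) (use gt in auto)
  qed
next
  assume ev: "\<forall>x t. ereal t < f x \<longrightarrow> eventually (\<lambda>z. ereal t < f z) (nhds x)"
  show "lsc_fun f"
    unfolding lsc_fun_def le_Liminf_iff
  proof (intro allI impI)
    fix x a assume "a < f x"
    then obtain t where at: "a < ereal t" and tx: "ereal t < f x" using ereal_dense2 by blast
    have "eventually (\<lambda>z. ereal t < f z) (nhds x)" using ev tx by blast
    then have "eventually (\<lambda>z. a < f z) (nhds x)"
      by (rule eventually_mono) (use at in auto)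
    then show "eventually (\<lambda>z. a < f z) (at x)"
      unfolding eventually_at_filter by (rule eventually_mono) auto
  qed
qed

lemma lsc_fun_add_continuous:
  assumes lsc: "lsc_fun f" and cont: "continuous_on UNIV h"
  shows "lsc_fun (\<lambda>x. f x + ereal (h x))"
  unfolding lsc_fun_iff_eventually
proof (intro allI impI)
  fix x t assume "ereal t < f x + ereal (h x)"
  then have "ereal (t - h x) < f x" by (cases "f x") auto
  then obtain b where tb: "ereal (t - h x) < ereal b" and bx: "ereal b < f x"
    using ereal_dense2 by blast
  have "eventually (\<lambda>z. ereal b < f z) (nhds x)"
    using lsc bx unfolding lsc_fun_iff_eventually by blast
  moreover have "(h \<longlongrightarrow> h x) (nhds x)"
    using cont by (simp add: continuous_on_eq_continuous_at isCont_def tendsto_at_iff_tendsto_nhds)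
  then have "eventually (\<lambda>z. t - b < h z) (nhds x)"
    using tb by (intro order_tendstoD(1)) auto
  ultimately show "eventually (\<lambda>z. ereal t < f z + ereal (h z)) (nhds x)"
  proof eventually_elim
    case (elim z) then show ?case by (cases "f z") auto
  qed
qed

lemma closed_sublevel_lsc_fun:
  assumes "lsc_fun g"
  shows "closed {x. g x \<le> t}"
proof -
  have "eventually (\<lambda>z. t < g z) (nhds x)" if "t < g x" for x
  proof -
    obtain s where ts: "t < ereal s" and sx: "ereal s < g x" using \<open>t < g x\<close> ereal_dense2 by blast
    have "eventually (\<lambda>z. ereal s < g z) (nhds x)"
      using assms sx unfolding lsc_fun_iff_eventually by blast
    then show ?thesis by (rule eventually_mono) (use ts in auto)
  qed
  then have "open {x. t < g x}"
    unfolding open_subopen[of "{x. t < g x}"] eventually_nhds by fastforce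
  then show ?thesis
    by (simp add: closed_def Compl_eq not_le)
qed

lemma lsc_fun_attains_min:
  fixes g :: "'a::euclidean_space \<Rightarrow> ereal"
  assumes lsc: "lsc_fun g" and bdd: "bounded {x. g x \<le> t}" and x0: "g x0 \<le> t"
  shows "\<exists>x. \<forall>z. g x \<le> g z"
proof (cases "t \<le> (INF z. g z)")
  case True
  then show ?thesis using x0 by (meson INF_lower UNIV_I order_trans)
next
  case False
  let ?K = "{x. g x \<le> t}"
  \<comment> \<open>the sublevel sets strictly above the infimum have the finite intersection property in ?K\<close>
  have "?K \<inter> (\<Inter>s\<in>{s. (INF z. g z) < s}. {x. g x \<le> s}) \<noteq> {}"
  proof (rule compact_imp_fip_image)
    show "compact ?K"
      using bdd closed_sublevel_lsc_fun[OF lsc] by (simp add: compact_eq_bounded_closed)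
    show "closed {x. g x \<le> s}" for s by (rule closed_sublevel_lsc_fun[OF lsc])
  next
    fix S assume S: "finite S" "S \<subseteq> {s. (INF z. g z) < s}"
    define m where "m = Min (insert t S)"
    have "(INF z. g z) < m"
      unfolding m_def using S False by (simp add: subset_eq)
    then obtain x where "g x < m" by (auto simp: INF_less_iff)
    then have "x \<in> ?K \<inter> (\<Inter>s\<in>S. {x. g x \<le> s})"
      unfolding m_def using S(1) by auto
    then show "?K \<inter> (\<Inter>s\<in>S. {x. g x \<le> s}) \<noteq> {}" by blast
  qed
  then obtain x where "\<And>s. (INF z. g z) < s \<Longrightarrow> g x \<le> s" by blast
  then have "g x \<le> (INF z. g z)" by (rule dense_ge)
  then show ?thesis by (meson INF_lower UNIV_I order_trans)
qed

lemma prox_lambdas_lower_bound: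
  fixes f :: "'a::euclidean_space \<Rightarrow> ereal"
  assumes "proper_fun f" and "mu \<in> prox_lambdas f"
  obtains x0 c where "\<And>y. ereal c \<le> f y + ereal (norm (y - x0) ^ 2 / (2 * mu))"
proof -
  from assms(2) obtain x0 where
    bdd: "-\<infinity> < (INF y. f y + ereal (norm (y - x0) ^ 2 / (2 * mu)))"
    unfolding prox_lambdas_def by blast
  from assms(1) obtain x1 where x1: "f x1 < \<infinity>" unfolding proper_fun_def by blast
  have "(INF y. f y + ereal (norm (y - x0) ^ 2 / (2 * mu)))
      \<le> f x1 + ereal (norm (x1 - x0) ^ 2 / (2 * mu))"
    by (rule INF_lower) simp
  also have "\<dots> < \<infinity>" using x1 by simp
  finally obtain c where c: "(INF y. f y + ereal (norm (y - x0) ^ 2 / (2 * mu))) = ereal c"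
    using bdd by (cases "INF y. f y + ereal (norm (y - x0) ^ 2 / (2 * mu))") auto
  show thesis
  proof (rule that)
    fix y
    have "(INF y. f y + ereal (norm (y - x0) ^ 2 / (2 * mu)))
        \<le> f y + ereal (norm (y - x0) ^ 2 / (2 * mu))"
      by (rule INF_lower) simp
    then show "ereal c \<le> f y + ereal (norm (y - x0) ^ 2 / (2 * mu))" by (simp only: c)
  qed
qed

lemma bounded_prox_sublevel:
  fixes f :: "'a::euclidean_space \<Rightarrow> ereal"
  assumes "0 < lam" and "lam < mu"
    and lb: "\<And>y. ereal c \<le> f y + ereal (norm (y - x0) ^ 2 / (2 * mu))"
  shows "bounded {y. f y + ereal (norm (y - x0) ^ 2 / (2 * lam)) \<le> ereal t}" (is "bounded ?S")
proof -
  define d where "d = 1 / (2 * lam) - 1 / (2 * mu)"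
  have "0 < d" using assms(1,2) unfolding d_def by (simp add: field_simps)
  have "y \<in> cball x0 (sqrt ((t - c) / d))"
    if le: "f y + ereal (norm (y - x0) ^ 2 / (2 * lam)) \<le> ereal t" for y
  proof -
    from le lb[of y] obtain r where r: "f y = ereal r" by (cases "f y") auto
    have "norm (y - x0) ^ 2 / (2 * lam) = norm (y - x0) ^ 2 / (2 * mu) + d * norm (y - x0) ^ 2"
      unfolding d_def by (simp add: field_simps)
    then have "d * norm (y - x0) ^ 2 \<le> t - c" using le lb[of y] r by simp
    then have "norm (y - x0) ^ 2 \<le> (t - c) / d" using \<open>0 < d\<close> by (simp add: field_simps)
    then have "norm (y - x0) \<le> sqrt ((t - c) / d)" by (rule real_le_rsqrt)
    then show ?thesis by (simp add: dist_norm norm_minus_commute)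
  qed
  then have "?S \<subseteq> cball x0 (sqrt ((t - c) / d))" by blast
  then show ?thesis by (rule bounded_subset[OF bounded_cball])
qed

lemma prox_minimizer_exists:
  fixes f :: "'a::euclidean_space \<Rightarrow> ereal"
  assumes "proper_fun f" and "lsc_fun f" and "0 < lam" and "lam < mu"
    and "\<And>y. ereal c \<le> f y + ereal (norm (y - x0) ^ 2 / (2 * mu))"
  shows "\<exists>ys. \<forall>z. f ys + ereal (norm (ys - x0) ^ 2 / (2 * lam))
                 \<le> f z + ereal (norm (z - x0) ^ 2 / (2 * lam))"
proof -
  from assms(1) obtain x1 where "f x1 < \<infinity>" "f x1 \<noteq> -\<infinity>"
    unfolding proper_fun_def by blast
  then obtain r where x1: "f x1 = ereal r" by (cases "f x1") auto
  have "continuous_on UNIV (\<lambda>y. norm (y - x0) ^ 2 / (2 * lam))"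
    by (intro continuous_intros) (use assms(3) in auto)
  with assms(2) have "lsc_fun (\<lambda>y. f y + ereal (norm (y - x0) ^ 2 / (2 * lam)))"
    by (rule lsc_fun_add_continuous)
  moreover have "f x1 + ereal (norm (x1 - x0) ^ 2 / (2 * lam))
      \<le> ereal (r + norm (x1 - x0) ^ 2 / (2 * lam))"
    using x1 by simp
  ultimately show ?thesis
    by (rule lsc_fun_attains_min[OF _ bounded_prox_sublevel[OF assms(3-5)]])
qed

lemma prox_subdiff_at_prox_minimizer:
  fixes f :: "'a::euclidean_space \<Rightarrow> ereal"
  assumes "proper_fun f" and "0 < lam"
    and min: "\<And>z. f ys + ereal (norm (ys - x0) ^ 2 / (2 * lam))
                   \<le> f z + ereal (norm (z - x0) ^ 2 / (2 * lam))"
  shows "(x0 - ys) /\<^sub>R lam \<in> prox_subdiff lam f ys"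
proof -
  from assms(1) obtain x1 where "f x1 < \<infinity>" and nm: "\<And>y. f y \<noteq> -\<infinity>"
    unfolding proper_fun_def by blast
  with min[of x1] obtain a where a: "f ys = ereal a" by (cases "f ys") auto
  have "ereal (a + (inner ((x0 - ys) /\<^sub>R lam) (z - ys) - norm (z - ys) ^ 2 / (2 * lam))) \<le> f z"
    for z
  proof (cases "f z")
    case (real b)
    have "norm (z - x0) ^ 2
        = norm (z - ys) ^ 2 + 2 * inner (z - ys) (ys - x0) + norm (ys - x0) ^ 2"
      by (simp add: power2_norm_eq_inner inner_diff_left inner_diff_right inner_commute)
    moreover have "inner ((x0 - ys) /\<^sub>R lam) (z - ys) = - inner (z - ys) (ys - x0) / lam"
      by (simp add: inner_commute inner_diff_left inner_diff_right algebra_simps divide_simps)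
    ultimately have "norm (z - x0) ^ 2 / (2 * lam) = norm (ys - x0) ^ 2 / (2 * lam)
        - (inner ((x0 - ys) /\<^sub>R lam) (z - ys) - norm (z - ys) ^ 2 / (2 * lam))"
      using \<open>0 < lam\<close> by (simp add: field_simps)
    then show ?thesis using min[of z] a real by simp
  qed (use nm in auto)
  then show ?thesis unfolding prox_subdiff_def using a by simp
qed

lemma prox_subdiff_imp_prox_lambdas:
  fixes f :: "'a::euclidean_space \<Rightarrow> ereal"
  assumes "0 < lam" and "f x \<noteq> -\<infinity>" and "v \<in> prox_subdiff lam f x"
  shows "lam \<in> prox_lambdas f"
proof -
  from assms(3) have "f x < \<infinity>"
    and sub: "\<And>y. f x + ereal (inner v (y - x) - norm (y - x) ^ 2 / (2 * lam)) \<le> f y"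
    unfolding prox_subdiff_def by auto
  with assms(2) obtain a where a: "f x = ereal a" by (cases "f x") auto
  define z where "z = x + lam *\<^sub>R v"
  have "ereal (a + lam * norm v ^ 2 / 2) \<le> f y + ereal (norm (y - z) ^ 2 / (2 * lam))" for y
  proof (cases "f y")
    case (real b)
    have "norm (y - z) ^ 2 = norm (y - x) ^ 2 - 2 * lam * inner v (y - x) + lam ^ 2 * norm v ^ 2"
      unfolding z_def power2_norm_eq_inner
      by (simp add: inner_diff_left inner_diff_right inner_commute algebra_simps power2_eq_square)
    then have "norm (y - z) ^ 2 / (2 * lam)
        = norm (y - x) ^ 2 / (2 * lam) - inner v (y - x) + lam * norm v ^ 2 / 2"
      using \<open>0 < lam\<close> by (simp add: field_simps power2_eq_square)
    then show ?thesis using sub[of y] a real by simp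
  qed (use sub[of y] a in auto)
  then have "ereal (a + lam * norm v ^ 2 / 2) \<le> (INF y. f y + ereal (norm (y - z) ^ 2 / (2 * lam)))"
    by (rule INF_greatest)
  then have "-\<infinity> < (INF y. f y + ereal (norm (y - z) ^ 2 / (2 * lam)))"
    by (rule less_le_trans[rotated]) simp
  then show ?thesis unfolding prox_lambdas_def using \<open>0 < lam\<close> by blast
qed

lemma dom_prox_subdiff_nonempty:
  fixes f :: "'a::euclidean_space \<Rightarrow> ereal"
  assumes "proper_fun f" and "lsc_fun f" and "0 < lam" and "ereal lam < prox_threshold f"
  shows "dom_prox_subdiff lam f \<noteq> {}"
proof -
  from assms(4) obtain mu where "mu \<in> prox_lambdas f" and "lam < mu"
    unfolding prox_threshold_def less_SUP_iff by auto
  then obtain x0 c where "\<And>y. ereal c \<le> f y + ereal (norm (y - x0) ^ 2 / (2 * mu))"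
    using prox_lambdas_lower_bound[OF assms(1)] by blast
  then obtain ys where "\<And>z. f ys + ereal (norm (ys - x0) ^ 2 / (2 * lam))
                           \<le> f z + ereal (norm (z - x0) ^ 2 / (2 * lam))"
    using prox_minimizer_exists[OF assms(1-3) \<open>lam < mu\<close>] by blast
  then have "(x0 - ys) /\<^sub>R lam \<in> prox_subdiff lam f ys"
    by (rule prox_subdiff_at_prox_minimizer[OF assms(1,3)])
  then show ?thesis unfolding dom_prox_subdiff_def by blast
qed

lemma SUP_ereal_eq_if_contains_below:
  fixes S P :: "real set"
  assumes "S \<subseteq> P" and "0 < (SUP l\<in>P. ereal l)"
    and below: "\<And>l. 0 < l \<Longrightarrow> ereal l < (SUP l\<in>P. ereal l) \<Longrightarrow> l \<in> S"
  shows "(SUP l\<in>S. ereal l) = (SUP l\<in>P. ereal l)"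
proof (rule antisym)
  show "(SUP l\<in>S. ereal l) \<le> (SUP l\<in>P. ereal l)"
    using assms(1) by (rule SUP_subset_mono) simp
  show "(SUP l\<in>P. ereal l) \<le> (SUP l\<in>S. ereal l)"
  proof (rule dense_le)
    fix y assume "y < (SUP l\<in>P. ereal l)"
    with assms(2) have "max y 0 < (SUP l\<in>P. ereal l)" by simp
    then obtain r where "max y 0 < ereal r" and "ereal r < (SUP l\<in>P. ereal l)"
      using ereal_dense2 by blast
    then have "y \<le> ereal r" and "r \<in> S" using below by auto
    then show "y \<le> (SUP l\<in>S. ereal l)" by (meson SUP_upper order_trans)
  qed
qed

theorem mainTheorem15:
  fixes f :: "'a::euclidean_space \<Rightarrow> ereal"
  assumes "proper_fun f" and "lsc_fun f" and "prox_bounded f"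
    and "prox_threshold f > 0"
  shows "(\<forall>lam::real. 0 < lam \<and> ereal lam < prox_threshold f \<longrightarrow> dom_prox_subdiff lam f \<noteq> {})
    \<and> prox_threshold f = (SUP lam\<in>{lam::real. lam > 0 \<and> dom_prox_subdiff lam f \<noteq> {}}. ereal lam)"
proof -
  have nonempty: "dom_prox_subdiff lam f \<noteq> {}" if "0 < lam" "ereal lam < prox_threshold f" for lam
    using dom_prox_subdiff_nonempty assms(1,2) that by blast
  have "{lam. lam > 0 \<and> dom_prox_subdiff lam f \<noteq> {}} \<subseteq> prox_lambdas f"
    using assms(1) prox_subdiff_imp_prox_lambdas
    unfolding dom_prox_subdiff_def proper_fun_def by blast
  then have "(SUP lam\<in>{lam. lam > 0 \<and> dom_prox_subdiff lam f \<noteq> {}}. ereal lam) = prox_threshold f"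
    unfolding prox_threshold_def
    by (rule SUP_ereal_eq_if_contains_below) (use assms(4) nonempty in \<open>auto simp: prox_threshold_def\<close>)
  with nonempty show ?thesis by simp
qed

end
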